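(* The abelian group $\ell^\infty(\mathbb{Z})_S$ is torsion-free: if $a,c\in\ell^\infty(\mathbb{Z})$ and $n\ge1$ satisfy $na=c-Sc$, then $a=c'-Sc'$ for some $c'\in\ell^\infty(\mathbb{Z})$.
   Context: $\ell^\infty(\mathbb{Z})$ denotes the abelian group of bounded integer-valued sequences $(a_j)_{j\in\mathbb{Z}}$, $S(a_j)_j=(a_{j+1})_j$ is the shift, and $\ell^\infty(\mathbb{Z})_S=\ell^\infty(\mathbb{Z})/\{a-Sa: a\in\ell^\infty(\mathbb{Z})\}$. *)

theory Defs
  imports Main
begin

definition bounded_int_seq :: "(int \<Rightarrow> int) \<Rightarrow> bool" where
  "bounded_int_seq a \<longleftrightarrow> (\<exists>B. \<forall>j. \<bar>a j\<bar> \<le> B)"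

definition shift :: "(int \<Rightarrow> int) \<Rightarrow> (int \<Rightarrow> int)" where
  "shift a = (\<lambda>j. a (j + 1))"

end

theory Submission
  imports Defs
begin

text \<open>From \<open>n a = c - S c\<close> all \<open>c\<^sub>j\<close> are congruent modulo \<open>n\<close>, say to \<open>r\<close>.
  Then \<open>c' = (c - r) / n\<close>, computed as \<open>c div n\<close>, is again bounded, and
  \<open>n (c' - S c') = c - S c = n a\<close>; cancelling \<open>n\<close> gives \<open>a = c' - S c'\<close>.\<close>

lemma shift_invariant_imp_constant:
  fixes f :: "int \<Rightarrow> 'a"
  assumes "\<And>j. f (j + 1) = f j"
  shows "f j = f k"
proof -
  have "f j = f 0" for j
  proof (induction j rule: int_induct[where k = 0])
    case (step2 i)
    then show ?case using assms[of "i - 1"] by simp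
  qed (use assms in simp_all)
  then show ?thesis by metis
qed

lemma abs_zdiv_le_abs:
  fixes x m :: int
  assumes "m > 0"
  shows "\<bar>x div m\<bar> \<le> \<bar>x\<bar>"
  using assms by (smt (verit, del_insts) div_by_1 pos_imp_zdiv_neg_iff zdiv_mono2 zdiv_mono2_neg)

lemma bounded_int_seq_div:
  assumes "bounded_int_seq c" and "m > 0"
  shows "bounded_int_seq (\<lambda>j. c j div m)"
proof -
  obtain B where "\<forall>j. \<bar>c j\<bar> \<le> B"
    using assms(1) by (auto simp: bounded_int_seq_def)
  then have "\<forall>j. \<bar>c j div m\<bar> \<le> B"
    using abs_zdiv_le_abs[OF assms(2)] order_trans by blast
  then show ?thesis by (auto simp: bounded_int_seq_def)
qed

lemma shift_diff_div_eq:
  fixes c :: "int \<Rightarrow> int"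
  assumes "\<And>j. c j mod m = c k mod m"
  shows "c j - shift c j = m * ((\<lambda>i. c i div m) j - shift (\<lambda>i. c i div m) j)"
proof -
  have "c i = m * (c i div m) + c k mod m" for i
    using div_mult_mod_eq[of "c i" m] assms[of i] by (simp add: mult.commute)
  from this[of j] this[of "j + 1"] show ?thesis
    by (simp add: shift_def right_diff_distrib)
qed

theorem lemma5p2:
  fixes a c :: "int \<Rightarrow> int" and n :: nat
  assumes "bounded_int_seq a" and "bounded_int_seq c" and "n \<ge> 1"
    and "\<forall>j. int n * a j = c j - shift c j"
  shows "\<exists>c'. bounded_int_seq c' \<and> (\<forall>j. a j = c' j - shift c' j)"
proof -
  define m where "m = int n"
  define c' where "c' = (\<lambda>j. c j div m)"
  have "m > 0" using assms(3) by (simp add: m_def)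
  have "c (j + 1) mod m = c j mod m" for j
  proof -
    have "c j = c (j + 1) + m * a j" using assms(4) by (simp add: shift_def m_def)
    then show ?thesis by simp
  qed
  then have residues_constant: "c j mod m = c 0 mod m" for j
    by (rule shift_invariant_imp_constant)
  have "m * a j = m * (c' j - shift c' j)" for j
  proof -
    have "m * a j = c j - shift c j" using assms(4) by (simp add: m_def)
    also have "\<dots> = m * (c' j - shift c' j)"
      unfolding c'_def using residues_constant by (rule shift_diff_div_eq)
    finally show ?thesis .
  qed
  then have "a j = c' j - shift c' j" for j
    using \<open>m > 0\<close> by simp
  moreover have "bounded_int_seq c'"
    unfolding c'_def using assms(2) \<open>m > 0\<close> by (rule bounded_int_seq_div)
  ultimately show ?thesis by blast
qed

end
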